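(* Let $F_0\in\mathcal F$. For all $x\in(1/3,1/2)$ and all integers $t\ge 0$, $$F_{4,t}(x)\le F_0(x)\cdot\left[1-4\left(\tfrac12 - F_0\!\left(\tfrac{x}{3}+\tfrac13\right)\right)^3\right]^t.$$
   Context: Voters form a continuum uniformly distributed on $[0,1]$. Candidates occupy points of $[0,1]$ and each voter votes for the nearest candidate. For candidates at distinct positions, the vote share of a candidate is the measure of the set of voters closer to it than to any other candidate: half the distance between its left and right neighbours, where a leftmost candidate at $y$ additionally receives all of $[0,y]$ and a rightmost candidate at $y$ additionally receives all of $[y,1]$. The plurality winner is the candidate with largest vote share, ties broken uniformly at random. Write $\mathrm{plurality}(x_1,\dots,x_k)$ for the (random) position of the plurality winner. Replicator dynamics: given a probability distribution $F_0$ on $[0,1]$ (identified with its CDF) and an integer $k\ge 2$, set $F_{k,0}=F_0$, and for $t\ge 1$ let $F_{k,t}(x)=\Pr(\mathrm{plurality}(X_{1,t},\dots,X_{k,t})\le x)$, where $X_{1,t},\dots,X_{k,t}$ are i.i.d. with distribution $F_{k,t-1}$. $\mathcal F$ denotes the set of probability distributions on $[0,1]$ that are symmetric about $1/2$ and atomless (continuous CDF). *)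

theory Defs
  imports "HOL-Probability.Probability"
begin

definition vote_share :: "nat \<Rightarrow> (nat \<Rightarrow> real) \<Rightarrow> nat \<Rightarrow> real" where
  "vote_share k xs i =
     measure lborel {v \<in> {0..1}. \<forall>j<k. j \<noteq> i \<longrightarrow> \<bar>v - xs i\<bar> < \<bar>v - xs j\<bar>}"

definition plurality_set :: "nat \<Rightarrow> (nat \<Rightarrow> real) \<Rightarrow> nat set" where
  "plurality_set k xs = {i. i < k \<and> (\<forall>j<k. vote_share k xs j \<le> vote_share k xs i)}"

definition win_prob :: "nat \<Rightarrow> (nat \<Rightarrow> real) \<Rightarrow> nat \<Rightarrow> real" where
  "win_prob k xs i =
     (if i \<in> plurality_set k xs then 1 / real (card (plurality_set k xs)) else 0)"

text \<open>One step of the replicator dynamics: distribution of the position of the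
  plurality winner among k i.i.d. candidates drawn from M.\<close>
definition plurality_step :: "nat \<Rightarrow> real measure \<Rightarrow> real measure" where
  "plurality_step k M =
     measure_of UNIV (sets borel)
       (\<lambda>A. \<integral>\<^sup>+ xs. ennreal (\<Sum>i<k. win_prob k xs i * indicator A (xs i))
              \<partial>(PiM {..<k} (\<lambda>_. M)))"

definition replicator_cdf :: "nat \<Rightarrow> nat \<Rightarrow> real measure \<Rightarrow> real \<Rightarrow> real" where
  "replicator_cdf k t M x = measure ((plurality_step k ^^ t) M) {..x}"

definition calF :: "real measure set" where
  "calF = {M. prob_space M \<and> sets M = sets borel \<and> measure M {0..1} = 1
             \<and> distr M borel (\<lambda>y. 1 - y) = M \<and> (\<forall>y. measure M {y} = 0)}"

end

theory Submission
  imports Defs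
begin

text \<open>Let \<open>F\<close> be symmetric and atomless, \<open>f = F(x)\<close> and \<open>c = x/3 + 1/3\<close>. By symmetry, twice
  the probability that the plurality winner of four independent candidates lies in \<open>[0, x]\<close>
  is the expected win mass of the candidates in \<open>[0, x] \<union> [1 - x, 1]\<close>. Comparing Voronoi
  cells, a candidate in \<open>[0, x]\<close> can only win if another candidate lies in \<open>[1 - x, 1]\<close>, or all
  four lie in \<open>[0, x]\<close>, or it is the only one there while the other three lie in
  \<open>(x, 1 - x)\<close> with positions summing to at least \<open>2 - x\<close>. Of the eight configurations obtained
  by reflecting some of these three candidates about \<open>1/2\<close>, at most two satisfy the last
  condition, and none does when all three lie in \<open>(c, 1 - c)\<close>. Integrating gives
  \<open>F\<^sub>t\<^sub>+\<^sub>1(x) \<le> f - f (1 - 2 F(c))\<^sup>3 \<le> f (1 - 4 (1/2 - F(c))\<^sup>3)\<close>. One step preserves symmetry and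
  atomlessness, and the same bound at \<open>c\<close> shows that \<open>F\<^sub>t(c)\<close> does not increase with \<open>t\<close>;
  iterating gives the theorem.\<close>

section \<open>Vote shares and plurality winners\<close>

definition voronoi_cell :: "nat \<Rightarrow> (nat \<Rightarrow> real) \<Rightarrow> nat \<Rightarrow> real set" where
  "voronoi_cell k xs i = {v \<in> {0..1}. \<forall>j<k. j \<noteq> i \<longrightarrow> \<bar>v - xs i\<bar> < \<bar>v - xs j\<bar>}"

lemma vote_share_eq_measure_cell: "vote_share k xs i = measure lborel (voronoi_cell k xs i)"
  by (simp add: vote_share_def voronoi_cell_def)

lemma sets_voronoi_cell [measurable]: "voronoi_cell k xs i \<in> sets borel"
proof -
  have "voronoi_cell k xs i =
      {v \<in> space borel. v \<in> {0..1} \<and> (\<forall>j\<in>{..<k}. j \<noteq> i \<longrightarrow> \<bar>v - xs i\<bar> < \<bar>v - xs j\<bar>)}"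
    unfolding voronoi_cell_def by auto
  also have "\<dots> \<in> sets borel" by measurable
  finally show ?thesis .
qed

lemma fmeasurable_voronoi_cell: "voronoi_cell k xs i \<in> fmeasurable lborel"
  by (rule fmeasurableI2[of "{0..1}"])
    (use fmeasurable_cbox[of "0::real" 1] in \<open>auto simp: voronoi_cell_def\<close>)

lemma vote_share_le_interval:
  assumes "voronoi_cell k xs i \<subseteq> {a..b}" "a \<le> b"
  shows "vote_share k xs i \<le> b - a"
proof -
  have "vote_share k xs i \<le> measure lborel {a..b}"
    unfolding vote_share_eq_measure_cell
    using assms fmeasurable_cbox[of a b] by (intro measure_mono_fmeasurable) auto
  with assms show ?thesis by simp
qed

lemma interval_le_vote_share:
  assumes "{a<..b} \<subseteq> voronoi_cell k xs i" "a \<le> b"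
  shows "b - a \<le> vote_share k xs i"
proof -
  have "measure lborel {a<..b} \<le> vote_share k xs i"
    unfolding vote_share_eq_measure_cell
    using assms fmeasurable_voronoi_cell by (intro measure_mono_fmeasurable) auto
  with assms show ?thesis by simp
qed

lemma vote_share_le_right_neighbour:
  assumes "j < k" "j \<noteq> i" "xs i < xs j" "0 \<le> xs i"
  shows "vote_share k xs i \<le> (xs i + xs j) / 2"
proof -
  have "voronoi_cell k xs i \<subseteq> {0..(xs i + xs j) / 2}"
    using assms by (auto simp: voronoi_cell_def abs_if)
  from vote_share_le_interval[OF this] assms show ?thesis by simp
qed

lemma vote_share_le_between_neighbours:
  assumes "j < k" "j \<noteq> i" "l < k" "l \<noteq> i" "xs l < xs i" "xs i < xs j"
  shows "vote_share k xs i \<le> (xs j - xs l) / 2"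
proof -
  have "voronoi_cell k xs i \<subseteq> {(xs i + xs l) / 2..(xs i + xs j) / 2}"
  proof
    fix v assume "v \<in> voronoi_cell k xs i"
    then have "\<bar>v - xs i\<bar> < \<bar>v - xs j\<bar>" "\<bar>v - xs i\<bar> < \<bar>v - xs l\<bar>"
      using assms by (auto simp: voronoi_cell_def)
    then show "v \<in> {(xs i + xs l) / 2..(xs i + xs j) / 2}"
      using assms by (auto simp: abs_if split: if_splits)
  qed
  from vote_share_le_interval[OF this] assms show ?thesis by (simp add: field_simps)
qed

lemma vote_share_ge_rightmost:
  assumes "\<And>j. j < k \<Longrightarrow> j \<noteq> i \<Longrightarrow> xs j \<le> l" "l < xs i" "xs i \<le> 1" "0 \<le> l"
  shows "1 - (xs i + l) / 2 \<le> vote_share k xs i"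
proof -
  have "{(xs i + l) / 2<..1} \<subseteq> voronoi_cell k xs i"
    using assms by (force simp: voronoi_cell_def abs_if)
  from interval_le_vote_share[OF this] assms show ?thesis by simp
qed

lemma measure_lborel_reflect:
  assumes "A \<in> sets borel"
  shows "measure lborel ((\<lambda>v. 1 - v) -` A) = measure lborel (A :: real set)"
proof -
  have "lborel = distr lborel borel (\<lambda>x::real. 1 - x)"
    using lborel_real_affine[of "-1" 1] by (simp add: density_1)
  also have "emeasure \<dots> A = emeasure lborel ((\<lambda>v. 1 - v) -` A)"
    using assms by (subst emeasure_distr) auto
  finally have "emeasure lborel A = emeasure lborel ((\<lambda>v. 1 - v) -` A)" .
  then show ?thesis by (simp add: measure_def)
qed

lemma vote_share_reflect: "vote_share k (\<lambda>j. 1 - xs j) i = vote_share k xs i"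
proof -
  have "voronoi_cell k (\<lambda>j. 1 - xs j) i = (\<lambda>v. 1 - v) -` voronoi_cell k xs i"
    unfolding voronoi_cell_def by (auto simp: abs_minus_commute)
  then show ?thesis
    unfolding vote_share_eq_measure_cell by (simp add: measure_lborel_reflect)
qed

lemma vote_share_cong:
  assumes "\<And>j. j < k \<Longrightarrow> xs j = ys j" "i < k"
  shows "vote_share k xs i = vote_share k ys i"
proof -
  have "voronoi_cell k xs i = voronoi_cell k ys i" using assms by (auto simp: voronoi_cell_def)
  then show ?thesis by (simp add: vote_share_eq_measure_cell)
qed

lemma finite_plurality_set: "finite (plurality_set k xs)"
  by (rule finite_subset[of _ "{..<k}"]) (auto simp: plurality_set_def)

lemma plurality_set_nonempty:
  assumes "0 < k" shows "plurality_set k xs \<noteq> {}"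
proof -
  obtain i where "i < k" "vote_share k xs i = Max (vote_share k xs ` {..<k})"
    using Max_in[of "vote_share k xs ` {..<k}"] assms by fastforce
  then have "i \<in> plurality_set k xs" by (auto simp: plurality_set_def)
  then show ?thesis by auto
qed

lemma win_prob_nonneg: "0 \<le> win_prob k xs i"
  by (simp add: win_prob_def)

lemma win_prob_le_1: "win_prob k xs i \<le> 1"
proof (cases "i \<in> plurality_set k xs")
  case True
  then have "card (plurality_set k xs) \<noteq> 0" using finite_plurality_set by auto
  then have "1 \<le> real (card (plurality_set k xs))" by linarith
  with True show ?thesis by (simp add: win_prob_def)
qed (simp add: win_prob_def)

lemma sum_win_prob:
  assumes "0 < k" shows "(\<Sum>i<k. win_prob k xs i) = 1"
proof -
  let ?S = "plurality_set k xs"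
  have "(\<Sum>i<k. win_prob k xs i) = (\<Sum>i\<in>{..<k} \<inter> ?S. 1 / real (card ?S))"
    unfolding win_prob_def by (rule sum.inter_restrict[symmetric]) simp
  also have "{..<k} \<inter> ?S = ?S" by (auto simp: plurality_set_def)
  finally show ?thesis
    using finite_plurality_set plurality_set_nonempty[OF assms] by simp
qed

lemma win_prob_eq_0_if_beaten:
  assumes "j < k" "vote_share k xs i < vote_share k xs j"
  shows "win_prob k xs i = 0"
proof -
  have "i \<notin> plurality_set k xs" using assms by (auto simp: plurality_set_def)
  then show ?thesis by (simp add: win_prob_def)
qed

lemma win_prob_reflect: "win_prob k (\<lambda>j. 1 - xs j) i = win_prob k xs i"
proof -
  have "plurality_set k (\<lambda>j. 1 - xs j) = plurality_set k xs"
    by (simp add: plurality_set_def vote_share_reflect)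
  then show ?thesis by (simp add: win_prob_def)
qed

lemma win_prob_cong:
  assumes "\<And>j. j < k \<Longrightarrow> xs j = ys j"
  shows "win_prob k xs i = win_prob k ys i"
proof -
  have "plurality_set k xs = plurality_set k ys"
    using vote_share_cong[OF assms] by (auto simp: plurality_set_def)
  then show ?thesis by (simp add: win_prob_def)
qed

definition winner_in :: "nat \<Rightarrow> (nat \<Rightarrow> real) \<Rightarrow> real set \<Rightarrow> real" where
  "winner_in k xs A = (\<Sum>i<k. win_prob k xs i * indicator A (xs i))"

lemma winner_in_bounds: "0 \<le> winner_in k xs A" "winner_in k xs A \<le> 1"
proof -
  show "0 \<le> winner_in k xs A"
    unfolding winner_in_def by (intro sum_nonneg) (simp add: win_prob_nonneg)
  have "winner_in k xs A \<le> (\<Sum>i<k. win_prob k xs i)"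
    unfolding winner_in_def by (intro sum_mono) (auto simp: indicator_def win_prob_nonneg)
  also have "\<dots> \<le> 1" by (cases "k = 0") (simp_all add: sum_win_prob)
  finally show "winner_in k xs A \<le> 1" .
qed

lemma winner_in_UNIV: "0 < k \<Longrightarrow> winner_in k xs UNIV = 1"
  by (simp add: winner_in_def sum_win_prob)

lemma measurable_vote_share:
  assumes "j < k" and coords: "\<And>l. l < k \<Longrightarrow> (\<lambda>xs. xs l) \<in> borel_measurable N"
  shows "(\<lambda>xs. vote_share k xs j) \<in> borel_measurable N"
proof -
  define Q where "Q = {p \<in> space (N \<Otimes>\<^sub>M lborel). snd p \<in> {0..1}
    \<and> (\<forall>l\<in>{..<k}. l \<noteq> j \<longrightarrow> \<bar>snd p - fst p j\<bar> < \<bar>snd p - fst p l\<bar>)}"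
  have [measurable]: "\<And>l. l < k \<Longrightarrow> (\<lambda>p. fst p l) \<in> borel_measurable (N \<Otimes>\<^sub>M lborel)"
    using coords by (intro measurable_compose[OF measurable_fst]) auto
  have "Q \<in> sets (N \<Otimes>\<^sub>M lborel)"
    unfolding Q_def using \<open>j < k\<close> by measurable
  then have "(\<lambda>xs. enn2real (emeasure lborel (Pair xs -` Q))) \<in> borel_measurable N"
    by (intro measurable_compose[OF lborel.measurable_emeasure_Pair]) auto
  moreover have "Pair xs -` Q = voronoi_cell k xs j" if "xs \<in> space N" for xs
    using that by (auto simp: Q_def voronoi_cell_def space_pair_measure)
  ultimately show ?thesis
    by (subst measurable_cong[where g="\<lambda>xs. enn2real (emeasure lborel (Pair xs -` Q))"])
       (auto simp: vote_share_eq_measure_cell measure_def)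
qed

lemma measurable_win_prob:
  assumes "i < k" and coords: "\<And>l. l < k \<Longrightarrow> (\<lambda>xs. xs l) \<in> borel_measurable N"
  shows "(\<lambda>xs. win_prob k xs i) \<in> borel_measurable N"
proof -
  have share: "\<And>j. j < k \<Longrightarrow> (\<lambda>xs. vote_share k xs j) \<in> borel_measurable N"
    using measurable_vote_share coords by blast
  have plurality: "Measurable.pred N (\<lambda>xs. j \<in> plurality_set k xs)" for j
  proof (cases "j < k")
    case True
    have "Measurable.pred N (\<lambda>xs. \<forall>l\<in>{..<k}. vote_share k xs l \<le> vote_share k xs j)"
    proof (intro pred_intros_finite(3))
      fix l assume "l \<in> {..<k}"
      with share True show "Measurable.pred N (\<lambda>xs. vote_share k xs l \<le> vote_share k xs j)"
        unfolding pred_def by (intro borel_measurable_le) auto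
    qed simp
    moreover have "j \<in> plurality_set k xs \<longleftrightarrow> (\<forall>l\<in>{..<k}. vote_share k xs l \<le> vote_share k xs j)"
      for xs using True by (auto simp: plurality_set_def)
    ultimately show ?thesis by simp
  qed (simp add: plurality_set_def)
  have "{..<k} \<inter> {j. j \<in> plurality_set k xs} = plurality_set k xs" for xs
    by (auto simp: plurality_set_def)
  then have "real (card (plurality_set k xs)) = (\<Sum>j<k. of_bool (j \<in> plurality_set k xs))" for xs
    by simp
  then have "win_prob k xs i = (if i \<in> plurality_set k xs
      then 1 / (\<Sum>j<k. of_bool (j \<in> plurality_set k xs)) else 0)" for xs
    by (simp add: win_prob_def)
  moreover have "(\<lambda>xs. if i \<in> plurality_set k xs
      then 1 / (\<Sum>j<k. of_bool (j \<in> plurality_set k xs)) else 0 :: real) \<in> borel_measurable N"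
    using plurality by (intro measurable_If borel_measurable_divide borel_measurable_sum) auto
  ultimately show ?thesis by simp
qed

lemma measurable_coordinate_PiM:
  assumes "sets M = sets borel" "i < k"
  shows "(\<lambda>xs. xs i) \<in> borel_measurable (PiM {..<k} (\<lambda>_. M))"
proof -
  have "(\<lambda>xs. xs i) \<in> measurable (PiM {..<k} (\<lambda>_. M)) M"
    using assms(2) by (intro measurable_component_singleton) auto
  then show ?thesis using measurable_cong_sets[OF refl assms(1)] by blast
qed

lemma ennreal_winner_in:
  "ennreal (winner_in k xs A) = (\<Sum>i<k. ennreal (win_prob k xs i) * indicator A (xs i))"
proof -
  have "ennreal (winner_in k xs A) = (\<Sum>i<k. ennreal (win_prob k xs i * indicator A (xs i)))"
    unfolding winner_in_def by (rule sum_ennreal[symmetric]) (simp add: win_prob_nonneg)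
  also have "\<dots> = (\<Sum>i<k. ennreal (win_prob k xs i) * indicator A (xs i))"
    by (intro sum.cong refl) (simp add: ennreal_mult' win_prob_nonneg ennreal_indicator)
  finally show ?thesis .
qed

lemma emeasure_plurality_step:
  assumes sets_M: "sets M = sets borel" and A: "A \<in> sets borel"
  shows "emeasure (plurality_step k M) A = (\<integral>\<^sup>+ xs. winner_in k xs A \<partial>PiM {..<k} (\<lambda>_. M))"
  unfolding plurality_step_def winner_in_def[symmetric]
proof (rule emeasure_measure_of_sigma)
  let ?P = "PiM {..<k} (\<lambda>_. M)"
  let ?\<mu> = "\<lambda>A. \<integral>\<^sup>+ xs. winner_in k xs A \<partial>?P"
  show "sigma_algebra UNIV (sets borel)" using sets.sigma_algebra_axioms[of borel] by simp
  show "positive (sets borel) ?\<mu>" by (simp add: positive_def winner_in_def)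
  show "countably_additive (sets borel) ?\<mu>"
    unfolding countably_additive_def
  proof (intro allI impI)
    fix F :: "nat \<Rightarrow> real set"
    assume F: "range F \<subseteq> sets borel" "disjoint_family F" "\<Union> (range F) \<in> sets borel"
    have [measurable]: "\<And>i. i < k \<Longrightarrow> (\<lambda>xs. win_prob k xs i) \<in> borel_measurable ?P"
      "\<And>i. i < k \<Longrightarrow> (\<lambda>xs. xs i) \<in> borel_measurable ?P"
      using measurable_win_prob measurable_coordinate_PiM[OF sets_M] by blast+
    have [measurable]: "F n \<in> sets borel" for n using F by auto
    have "(\<Sum>n. ?\<mu> (F n)) = (\<integral>\<^sup>+ xs. (\<Sum>n. ennreal (winner_in k xs (F n))) \<partial>?P)"
      unfolding winner_in_def by (rule nn_integral_suminf[symmetric]) measurable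
    also have "\<dots> = ?\<mu> (\<Union> (range F))"
    proof (intro nn_integral_cong)
      fix xs
      have "(\<Sum>n. ennreal (winner_in k xs (F n)))
          = (\<Sum>i<k. \<Sum>n. ennreal (win_prob k xs i) * indicator (F n) (xs i))"
        unfolding ennreal_winner_in by (rule suminf_sum[OF summableI])
      also have "\<dots> = ennreal (winner_in k xs (\<Union> (range F)))"
        by (simp add: ennreal_winner_in ennreal_suminf_cmult suminf_indicator[OF F(2)])
      finally show "(\<Sum>n. ennreal (winner_in k xs (F n))) = ennreal (winner_in k xs (\<Union> (range F)))" .
    qed
    finally show "(\<Sum>n. ?\<mu> (F n)) = ?\<mu> (\<Union> (range F))" .
  qed
qed (rule A)

lemma sets_plurality_step [measurable_cong]: "sets (plurality_step k M) = sets borel"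
  unfolding plurality_step_def using sets.sigma_sets_eq[of borel]
  by (simp add: sets_measure_of_conv)

section \<open>Four candidates and a threshold \<open>x \<in> (1/3, 1/2)\<close>\<close>

lemma obtain_sorted_triple:
  fixes xs :: "'a \<Rightarrow> real"
  assumes "card T = 3" "inj_on xs T"
  obtains p q r where "T = {p, q, r}" "xs p < xs q" "xs q < xs r"
proof -
  obtain a b c where T: "T = {a, b, c}" "a \<noteq> b" "b \<noteq> c" "a \<noteq> c"
    using assms(1) unfolding card_3_iff by blast
  then have "xs a \<noteq> xs b" "xs b \<noteq> xs c" "xs a \<noteq> xs c"
    using assms(2) by (auto dest: inj_onD)
  then consider "xs a < xs b" "xs b < xs c" | "xs a < xs c" "xs c < xs b"
    | "xs b < xs a" "xs a < xs c" | "xs b < xs c" "xs c < xs a"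
    | "xs c < xs a" "xs a < xs b" | "xs c < xs b" "xs b < xs a"
    by (meson linorder_neqE_linordered_idom order.strict_trans)
  then show ?thesis
  proof cases
    case 1 then show ?thesis using that T(1) by blast
  next
    case 2 then show ?thesis using that[of a c b] T(1) by (simp add: insert_commute)
  next
    case 3 then show ?thesis using that[of b a c] T(1) by (simp add: insert_commute)
  next
    case 4 then show ?thesis using that[of b c a] T(1) by (simp add: insert_commute)
  next
    case 5 then show ?thesis using that[of c a b] T(1) by (simp add: insert_commute)
  next
    case 6 then show ?thesis using that[of c b a] T(1) by (simp add: insert_commute)
  qed
qed

lemma card_le_2_if_sym_diff_le_1:
  assumes "\<And>B B'. B \<in> F \<Longrightarrow> B' \<in> F \<Longrightarrow> card (sym_diff B B') \<le> 1"
    and "\<And>B. B \<in> F \<Longrightarrow> finite B"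
  shows "card F \<le> 2"
proof (cases "\<exists>B1 B2. B1 \<in> F \<and> B2 \<in> F \<and> B1 \<noteq> B2")
  case False
  then have "F = {} \<or> (\<exists>B. F = {B})" by blast
  then show ?thesis by auto
next
  case True
  then obtain B1 B2 where B12: "B1 \<in> F" "B2 \<in> F" "B1 \<noteq> B2" by blast
  have singleton: "\<exists>j. sym_diff B B' = {j}" if "B \<in> F" "B' \<in> F" "B \<noteq> B'" for B B'
  proof -
    have "finite (sym_diff B B')" "sym_diff B B' \<noteq> {}" using assms(2) that by auto
    with assms(1)[OF that(1,2)] have "card (sym_diff B B') = 1"
      by (metis card_0_eq le_antisym less_one not_le)
    then show ?thesis by (rule card_1_singletonE) blast
  qed
  have "B3 \<in> {B1, B2}" if "B3 \<in> F" for B3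
  proof (rule ccontr)
    assume "B3 \<notin> {B1, B2}"
    then obtain j l m where "sym_diff B1 B2 = {j}" "sym_diff B3 B1 = {l}" "sym_diff B3 B2 = {m}"
      using singleton B12 \<open>B3 \<in> F\<close> by (metis insertCI)
    \<comment> \<open>the symmetric difference of \<open>{l}\<close> and \<open>{m}\<close> has zero or two elements\<close>
    then have "{j} = ({l} - {m}) \<union> ({m} - {l})" by blast
    then show False by (cases "l = m") auto
  qed
  then have "card F \<le> card {B1, B2}" by (intro card_mono) auto
  also have "\<dots> \<le> 2" by (simp add: card_insert_if)
  finally show ?thesis .
qed

definition flip :: "nat set \<Rightarrow> (nat \<Rightarrow> real) \<Rightarrow> nat \<Rightarrow> real" where
  "flip B xs = (\<lambda>i. if i \<in> B then 1 - xs i else xs i)"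

definition generic_profile :: "(nat \<Rightarrow> real) \<Rightarrow> bool" where
  "generic_profile xs \<longleftrightarrow> inj_on xs {..<4} \<and> (\<forall>i<4. 0 \<le> xs i \<and> xs i \<le> 1)"

lemma generic_profile_reflect: "generic_profile xs \<Longrightarrow> generic_profile (\<lambda>j. 1 - xs j)"
  by (auto simp: generic_profile_def inj_on_def)

locale plurality_threshold =
  fixes x :: real
  assumes threshold_gt: "1/3 < x" and threshold_lt: "x < 1/2"
begin

lemma win_prob_left_eq_0_if_two_left:
  assumes distinct: "inj_on xs {..<k}"
    and range: "\<And>i. i < k \<Longrightarrow> 0 \<le> xs i \<and> xs i \<le> 1"
    and no_right: "\<And>i. i < k \<Longrightarrow> xs i < 1 - x"
    and m: "m < k" "x < xs m" "\<And>j. j < k \<Longrightarrow> xs j \<le> xs m"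
    and two_left: "a < k" "b < k" "a \<noteq> b" "xs a \<le> x" "xs b \<le> x"
    and j: "j < k" "xs j \<le> x"
  shows "win_prob k xs j = 0"
proof -
  let ?T = "{..<k} - {m}"
  define l where "l = Max (xs ` ?T)"
  have "a \<in> ?T" using two_left m by auto
  then have "l \<in> xs ` ?T" and l_ge: "\<And>j. j \<in> ?T \<Longrightarrow> xs j \<le> l"
    unfolding l_def by (auto intro: Max_in)
  then obtain j0 where j0: "j0 \<in> ?T" "l = xs j0" by auto
  have "xs j0 \<noteq> xs m" using inj_onD[OF distinct] j0 m by blast
  then have "l < xs m" using j0 m by force
  then have "1 - (xs m + l) / 2 \<le> vote_share k xs m"
    using j0 range m l_ge by (intro vote_share_ge_rightmost) auto
  moreover have "xs m < 1 - x" "l < 1 - x" using no_right m j0 by auto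
  ultimately have share_m: "x < vote_share k xs m" by (simp add: add_divide_distrib)
  define c where "c = (if j = a then b else a)"
  have c: "c < k" "c \<noteq> j" "xs c \<le> x" using two_left by (auto simp: c_def)
  have "vote_share k xs j \<le> x"
  proof (cases "xs c < xs j")
    case True
    then have "vote_share k xs j \<le> (xs m - xs c) / 2"
      using c j m by (intro vote_share_le_between_neighbours) auto
    also have "\<dots> \<le> x" using range[of c] c \<open>xs m < 1 - x\<close> threshold_gt by auto
    finally show ?thesis .
  next
    case False
    moreover have "xs c \<noteq> xs j" using inj_onD[OF distinct] c j by blast
    ultimately have "xs j < xs c" by linarith
    then have "vote_share k xs j \<le> (xs j + xs c) / 2"
      using c range j by (intro vote_share_le_right_neighbour) auto
    also have "\<dots> \<le> x" using c j by auto
    finally show ?thesis .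
  qed
  with share_m m show ?thesis by (intro win_prob_eq_0_if_beaten) auto
qed

lemma win_prob_lone_left_eq_0:
  assumes distinct: "inj_on xs {..<4}"
    and range: "\<And>i. i < 4 \<Longrightarrow> 0 \<le> xs i \<and> xs i \<le> 1"
    and a: "a < 4" "xs a \<le> x" and others: "\<And>j. j < 4 \<Longrightarrow> j \<noteq> a \<Longrightarrow> x < xs j"
    and light: "xs a + (\<Sum>j\<in>{..<4} - {a}. xs j) < 2"
  shows "win_prob 4 xs a = 0"
proof -
  have "card ({..<4} - {a}) = 3" "inj_on xs ({..<4} - {a})"
    using a distinct by (auto intro: inj_on_subset)
  then obtain p q r where T: "{..<4} - {a} = {p, q, r}" and pqr: "xs p < xs q" "xs q < xs r"
    by (rule obtain_sorted_triple)
  have "p \<in> {..<4} - {a}" "q \<in> {..<4} - {a}" "r \<in> {..<4} - {a}"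
    unfolding T by simp_all
  then have idx: "p < 4" "q < 4" "r < 4" "p \<noteq> a" "q \<noteq> a" "r \<noteq> a" by auto
  from pqr have "p \<noteq> q" "q \<noteq> r" "p \<noteq> r" by auto
  have "xs j \<le> xs q" if "j < 4" "j \<noteq> r" for j
  proof (cases "j = a")
    case False
    with that have "j \<in> {p, q, r}" unfolding T[symmetric] by simp
    with that have "j = p \<or> j = q" by auto
    with pqr show ?thesis by auto
  qed (use a others[of q] idx in auto)
  then have "1 - (xs r + xs q) / 2 \<le> vote_share 4 xs r"
    using pqr range[of r] range[of q] idx by (intro vote_share_ge_rightmost) auto
  moreover have "vote_share 4 xs a \<le> (xs a + xs p) / 2"
    using idx others[of p] a range[of a] by (intro vote_share_le_right_neighbour) auto
  moreover have "(\<Sum>j\<in>{..<4} - {a}. xs j) = xs p + xs q + xs r"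
    unfolding T using \<open>p \<noteq> q\<close> \<open>q \<noteq> r\<close> \<open>p \<noteq> r\<close> by simp
  ultimately have "vote_share 4 xs a < vote_share 4 xs r"
    using light by (simp add: add_divide_distrib)
  with idx show ?thesis by (intro win_prob_eq_0_if_beaten)
qed

definition ind_left :: "real \<Rightarrow> real" where "ind_left y = indicator {..x} y"
definition ind_right :: "real \<Rightarrow> real" where "ind_right y = indicator {1 - x..} y"
definition ind_mid :: "real \<Rightarrow> real" where "ind_mid y = indicator {x<..<1 - x} y"

lemma ind_bounds:
  "0 \<le> ind_left y" "ind_left y \<le> 1" "0 \<le> ind_right y" "ind_right y \<le> 1"
  "0 \<le> ind_mid y" "ind_mid y \<le> 1"
  by (auto simp: ind_left_def ind_right_def ind_mid_def indicator_def)

lemma ind_left_reflect: "ind_left (1 - y) = ind_right y"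
  and ind_mid_reflect: "ind_mid (1 - y) = ind_mid y"
  by (auto simp: ind_left_def ind_right_def ind_mid_def indicator_def)

text \<open>Candidate \<open>a\<close> is the only one in \<open>[0, x]\<close>, the others lie in \<open>(x, 1 - x)\<close>, and
  they are far enough to the right that \<open>a\<close> may still win.\<close>
definition lone_left :: "nat \<Rightarrow> (nat \<Rightarrow> real) \<Rightarrow> real" where
  "lone_left a xs = ind_left (xs a) * (\<Prod>j\<in>{..<4} - {a}. ind_mid (xs j))
     * of_bool (2 - x \<le> (\<Sum>j\<in>{..<4} - {a}. xs j))"

lemma lone_left_nonneg: "0 \<le> lone_left a xs"
  unfolding lone_left_def by (auto intro!: mult_nonneg_nonneg prod_nonneg simp: ind_bounds)

lemma lone_left_le_1: "lone_left a xs \<le> 1"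
  unfolding lone_left_def using ind_bounds
  by (intro mult_le_one prod_le_1 prod_nonneg mult_nonneg_nonneg) auto

text \<open>One term for each case of \<open>side_win_mass_le_win_bound\<close>: candidates on both sides,
  all four candidates on one side, and a lone candidate on one side.\<close>
definition win_bound :: "(nat \<Rightarrow> real) \<Rightarrow> real" where
  "win_bound xs =
     (1 - (\<Prod>i<4. 1 - ind_right (xs i))) * (1 - (\<Prod>i<4. 1 - ind_left (xs i)))
     + (\<Prod>i<4. ind_left (xs i)) + (\<Prod>i<4. ind_right (xs i))
     + (\<Sum>a<4. lone_left a xs + lone_left a (\<lambda>j. 1 - xs j))"

lemma left_win_mass_le_if_no_right:
  assumes generic: "generic_profile xs" and no_right: "\<And>i. i < 4 \<Longrightarrow> xs i < 1 - x"
  shows "(\<Sum>i<4. win_prob 4 xs i * ind_left (xs i))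
    \<le> (\<Prod>i<4. ind_left (xs i)) + (\<Sum>a<4. lone_left a xs)"
proof -
  have distinct: "inj_on xs {..<4}" and range: "\<And>i. i < 4 \<Longrightarrow> 0 \<le> xs i \<and> xs i \<le> 1"
    using generic by (auto simp: generic_profile_def)
  have lone_nonneg: "0 \<le> (\<Sum>a<4. lone_left a xs)" by (intro sum_nonneg) (simp add: lone_left_nonneg)
  have prod_nonneg: "0 \<le> (\<Prod>i<4. ind_left (xs i))" by (intro prod_nonneg) (simp add: ind_bounds)
  consider "\<forall>i<4. xs i \<le> x"
    | (none) "\<forall>i<4. x < xs i"
    | (two) a b where "a < 4" "b < 4" "a \<noteq> b" "xs a \<le> x" "xs b \<le> x" "\<exists>i<4. x < xs i"
    | (one) a where "a < 4" "xs a \<le> x" "\<And>j. j < 4 \<Longrightarrow> j \<noteq> a \<Longrightarrow> x < xs j"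
    by (metis not_le)
  then show ?thesis
  proof cases
    case 1
    then have "(\<Prod>i<4. ind_left (xs i)) = 1" by (simp add: ind_left_def)
    moreover have "(\<Sum>i<4. win_prob 4 xs i * ind_left (xs i)) \<le> (\<Sum>i<4. win_prob 4 xs i)"
      by (intro sum_mono) (simp add: ind_bounds win_prob_nonneg mult_left_le)
    ultimately show ?thesis using sum_win_prob[of 4 xs] lone_nonneg by simp
  next
    case none
    then have "(\<Sum>i<4. win_prob 4 xs i * ind_left (xs i)) = 0"
      by (intro sum.neutral) (auto simp: ind_left_def not_le)
    with lone_nonneg prod_nonneg show ?thesis by simp
  next
    case two
    have "Max (xs ` {..<4}) \<in> xs ` {..<4::nat}" by (intro Max_in) (auto simp: lessThan_empty_iff)
    then obtain m where m: "m < 4" "xs m = Max (xs ` {..<4})" by auto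
    then have m_max: "\<And>j. j < 4 \<Longrightarrow> xs j \<le> xs m" by simp
    with two have "x < xs m" by force
    then have "(\<Sum>i<4. win_prob 4 xs i * ind_left (xs i)) = 0"
      using win_prob_left_eq_0_if_two_left[OF distinct range no_right m(1) _ m_max two(1-5)]
      by (intro sum.neutral) (auto simp: ind_left_def indicator_def)
    with lone_nonneg prod_nonneg show ?thesis by simp
  next
    case one
    have "(\<Sum>i<4. win_prob 4 xs i * ind_left (xs i)) = (\<Sum>i<4. if i = a then win_prob 4 xs a else 0)"
      by (intro sum.cong refl) (use one in \<open>force simp: ind_left_def indicator_def\<close>)
    also have "\<dots> = win_prob 4 xs a" using one by simp
    also have "\<dots> \<le> lone_left a xs"
    proof (cases "2 - x \<le> (\<Sum>j\<in>{..<4} - {a}. xs j)")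
      case True
      have "(\<Prod>j\<in>{..<4} - {a}. ind_mid (xs j)) = 1"
        by (intro prod.neutral) (use one no_right in \<open>auto simp: ind_mid_def\<close>)
      with True one have "lone_left a xs = 1" by (simp add: lone_left_def ind_left_def)
      then show ?thesis by (simp add: win_prob_le_1)
    next
      case False
      with one have "win_prob 4 xs a = 0"
        by (intro win_prob_lone_left_eq_0[OF distinct range]) auto
      then show ?thesis by (simp add: lone_left_nonneg)
    qed
    also have "\<dots> \<le> (\<Sum>a<4. lone_left a xs)"
      by (rule member_le_sum) (use one in \<open>auto simp: lone_left_nonneg\<close>)
    finally show ?thesis using prod_nonneg by simp
  qed
qed

lemma side_win_mass_le_win_bound:
  assumes generic: "generic_profile xs"
  shows "(\<Sum>i<4. win_prob 4 xs i * (ind_left (xs i) + ind_right (xs i))) \<le> win_bound xs"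
proof -
  let ?PR = "\<Prod>i<4. 1 - ind_right (xs i)" and ?PL = "\<Prod>i<4. 1 - ind_left (xs i)"
  let ?L = "\<Sum>a<4. lone_left a xs" and ?R = "\<Sum>a<4. lone_left a (\<lambda>j. 1 - xs j)"
  have bound_eq: "win_bound xs = (1 - ?PR) * (1 - ?PL)
      + (\<Prod>i<4. ind_left (xs i)) + (\<Prod>i<4. ind_right (xs i)) + ?L + ?R"
    unfolding win_bound_def by (simp add: sum.distrib)
  have nonneg: "0 \<le> ?L" "0 \<le> ?R" "0 \<le> (\<Prod>i<4. ind_left (xs i))" "0 \<le> (\<Prod>i<4. ind_right (xs i))"
    "0 \<le> ?PR" "0 \<le> ?PL" "?PR \<le> 1" "?PL \<le> 1"
    by (auto intro!: sum_nonneg prod_nonneg prod_le_1 simp: lone_left_nonneg ind_bounds)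
  consider (both) i j where "i < 4" "xs i \<le> x" "j < 4" "1 - x \<le> xs j"
    | (no_right) "\<And>i. i < 4 \<Longrightarrow> xs i < 1 - x"
    | (no_left) "\<And>i. i < 4 \<Longrightarrow> x < xs i"
    by (metis not_le)
  then show ?thesis
  proof cases
    case both
    have "?PR = 0" using both by (auto intro!: prod_zero bexI[of _ j] simp: ind_right_def)
    have "?PL = 0" using both by (auto intro!: prod_zero bexI[of _ i] simp: ind_left_def)
    have "(\<Sum>i<4. win_prob 4 xs i * (ind_left (xs i) + ind_right (xs i))) \<le> (\<Sum>i<4. win_prob 4 xs i)"
    proof (intro sum_mono)
      fix i
      have "ind_left (xs i) + ind_right (xs i) \<le> 1"
        using threshold_lt by (auto simp: ind_left_def ind_right_def indicator_def)
      then show "win_prob 4 xs i * (ind_left (xs i) + ind_right (xs i)) \<le> win_prob 4 xs i"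
        by (simp add: mult_left_le win_prob_nonneg add_nonneg_nonneg ind_bounds)
    qed
    then show ?thesis using sum_win_prob[of 4 xs] nonneg
      unfolding bound_eq \<open>?PR = 0\<close> \<open>?PL = 0\<close> by simp
  next
    case no_right
    then have "ind_right (xs i) = 0" if "i < 4" for i
      using that by (force simp: ind_right_def)
    then have "(\<Sum>i<4. win_prob 4 xs i * (ind_left (xs i) + ind_right (xs i)))
        = (\<Sum>i<4. win_prob 4 xs i * ind_left (xs i))" and "?PR = 1"
      by (auto intro!: sum.cong prod.neutral)
    with left_win_mass_le_if_no_right[OF generic no_right] nonneg show ?thesis
      unfolding bound_eq by simp
  next
    case no_left
    let ?ys = "\<lambda>j. 1 - xs j"
    have "ind_left (xs i) = 0" if "i < 4" for i
      using no_left that by (force simp: ind_left_def)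
    then have "?PL = 1" and "(\<Sum>i<4. win_prob 4 xs i * (ind_left (xs i) + ind_right (xs i)))
        = (\<Sum>i<4. win_prob 4 ?ys i * ind_left (?ys i))"
      by (auto intro!: sum.cong prod.neutral simp: win_prob_reflect ind_left_reflect)
    moreover have "(\<Sum>i<4. win_prob 4 ?ys i * ind_left (?ys i)) \<le> (\<Prod>i<4. ind_right (xs i)) + ?R"
      using left_win_mass_le_if_no_right[OF generic_profile_reflect[OF generic]] no_left
      by (simp add: ind_left_reflect)
    ultimately show ?thesis using nonneg unfolding bound_eq by simp
  qed
qed

definition heavy_flips :: "nat set \<Rightarrow> (nat \<Rightarrow> real) \<Rightarrow> nat set set" where
  "heavy_flips T y = {B \<in> Pow T. 2 - x \<le> (\<Sum>j\<in>T. flip B y j)}"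

text \<open>For two heavy reflections \<open>B, B'\<close>, the sum of both position sums is at least
  \<open>4 - 2x\<close>; each index of \<open>D = sym_diff B B'\<close> contributes exactly \<open>1\<close> to it and each other
  index less than \<open>2 - 2x\<close>. Hence \<open>|D| \<le> 1\<close>.\<close>
lemma card_heavy_flips_le_2:
  assumes card_T: "card T = 3" and mid: "\<And>j. j \<in> T \<Longrightarrow> x < y j \<and> y j < 1 - x"
  shows "card (heavy_flips T y) \<le> 2"
  unfolding heavy_flips_def
proof (rule card_le_2_if_sym_diff_le_1)
  have fin: "finite T" using card_T by (simp add: card_ge_0_finite)
  then show "\<And>B. B \<in> {B \<in> Pow T. 2 - x \<le> (\<Sum>j\<in>T. flip B y j)} \<Longrightarrow> finite B"
    using finite_subset by auto
  fix B B' assume B: "B \<in> {B \<in> Pow T. 2 - x \<le> (\<Sum>j\<in>T. flip B y j)}"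
    and B': "B' \<in> {B \<in> Pow T. 2 - x \<le> (\<Sum>j\<in>T. flip B y j)}"
  define D where "D = sym_diff B B'"
  let ?s = "\<lambda>j. flip B y j + flip B' y j"
  have "D \<subseteq> T" using B B' by (auto simp: D_def)
  then have card_D: "card D \<le> 3" and card_rest: "card (T - D) = 3 - card D"
    using fin card_T card_mono[OF fin] by (auto simp: card_Diff_subset finite_subset)
  have "4 - 2 * x \<le> (\<Sum>j\<in>T. ?s j)" using B B' by (simp add: sum.distrib)
  also have "\<dots> = (\<Sum>j\<in>D. ?s j) + (\<Sum>j\<in>T - D. ?s j)"
    using fin \<open>D \<subseteq> T\<close> by (metis (no_types, lifting) sum.subset_diff add.commute)
  also have "(\<Sum>j\<in>D. ?s j) = (\<Sum>j\<in>D. 1)"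
    by (intro sum.cong refl) (auto simp: D_def flip_def)
  also have "\<dots> = card D" by simp
  finally have total: "4 - 2 * x \<le> card D + (\<Sum>j\<in>T - D. ?s j)" .
  have rest: "?s j < 2 - 2 * x" if "j \<in> T - D" for j
    using that mid[of j] by (auto simp: D_def flip_def)
  show "card D \<le> 1"
  proof (rule ccontr)
    assume "\<not> card D \<le> 1"
    with card_D consider "card D = 2" | "card D = 3" by linarith
    then show False
    proof cases
      case 1
      with card_rest have "card (T - D) = 1" by simp
      then obtain j where "T - D = {j}" by (rule card_1_singletonE)
      then show False using total rest[of j] 1 by simp
    next
      case 2
      with card_rest fin have "T - D = {}" by simp
      then have "(\<Sum>j\<in>T - D. ?s j) = 0" by (simp only: sum.empty)
      then show False using total 2 threshold_lt by simp
    qed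
  qed
qed

text \<open>Three candidates in \<open>(core, 1 - core)\<close> have positions summing to less than
  \<open>3 (1 - core) = 2 - x\<close>, whichever of them are reflected.\<close>
definition core :: real where "core = x / 3 + 1 / 3"

definition ind_core :: "real \<Rightarrow> real" where "ind_core y = indicator {core<..<1 - core} y"

lemma heavy_flips_empty:
  assumes card_T: "card T = 3" and in_core: "\<And>j. j \<in> T \<Longrightarrow> core < y j \<and> y j < 1 - core"
  shows "heavy_flips T y = {}"
proof -
  have "finite T" "T \<noteq> {}" using card_T card_ge_0_finite[of T] by auto
  have "\<not> 2 - x \<le> (\<Sum>j\<in>T. flip B y j)" if "B \<subseteq> T" for B
  proof -
    have "(\<Sum>j\<in>T. flip B y j) < (\<Sum>j\<in>T. 1 - core)"
      using in_core \<open>finite T\<close> \<open>T \<noteq> {}\<close> by (intro sum_strict_mono) (simp_all add: flip_def)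
    also have "\<dots> = 2 - x" using card_T by (simp add: core_def)
    finally show ?thesis by simp
  qed
  then show ?thesis by (auto simp: heavy_flips_def)
qed

lemma ind_core_le_ind_mid: "ind_core y \<le> ind_mid y"
  using threshold_gt by (auto simp: core_def ind_core_def ind_mid_def indicator_def)

lemma sum_flips_lone_left_le:
  assumes a: "a < 4"
  shows "(\<Sum>B\<in>Pow ({..<4} - {a}). lone_left a (flip B xs))
    \<le> 2 * ind_left (xs a)
        * ((\<Prod>j\<in>{..<4} - {a}. ind_mid (xs j)) - (\<Prod>j\<in>{..<4} - {a}. ind_core (xs j)))"
proof -
  let ?T = "{..<4::nat} - {a}"
  let ?mid = "\<Prod>j\<in>?T. ind_mid (xs j)" and ?core = "\<Prod>j\<in>?T. ind_core (xs j)"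
  let ?heavy = "heavy_flips ?T xs"
  have card_T: "card ?T = 3" using a by simp
  have "lone_left a (flip B xs) = ind_left (xs a) * ?mid * of_bool (B \<in> ?heavy)"
    if "B \<in> Pow ?T" for B
  proof -
    have "flip B xs a = xs a" using that by (auto simp: flip_def)
    moreover have "(\<Prod>j\<in>?T. ind_mid (flip B xs j)) = ?mid"
      by (intro prod.cong refl) (auto simp: flip_def ind_mid_reflect)
    ultimately show ?thesis using that by (simp add: lone_left_def heavy_flips_def)
  qed
  then have "(\<Sum>B\<in>Pow ?T. lone_left a (flip B xs)) = ind_left (xs a) * ?mid * card ?heavy"
    by (simp add: sum_distrib_left[symmetric] of_bool_def sum.If_cases Int_def heavy_flips_def)
  also have "\<dots> \<le> 2 * ind_left (xs a) * (?mid - ?core)"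
  proof (cases "\<forall>j\<in>?T. x < xs j \<and> xs j < 1 - x")
    case False
    then have "?mid = 0" by (force intro: prod_zero simp: ind_mid_def)
    moreover have "0 \<le> ?core" by (intro prod_nonneg) (simp add: ind_core_def)
    moreover have "?core \<le> ?mid"
      by (intro prod_mono conjI ind_core_le_ind_mid) (simp add: ind_core_def)
    ultimately have "?core = 0" by linarith
    with \<open>?mid = 0\<close> show ?thesis by (simp only:) simp
  next
    case mid: True
    then have "?mid = 1" by (intro prod.neutral) (auto simp: ind_mid_def)
    show ?thesis
    proof (cases "\<forall>j\<in>?T. core < xs j \<and> xs j < 1 - core")
      case True
      then have "?heavy = {}" by (intro heavy_flips_empty[OF card_T]) auto
      moreover have "?core = 1" using True by (intro prod.neutral) (auto simp: ind_core_def)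
      ultimately show ?thesis using \<open>?mid = 1\<close> by (simp only:) simp
    next
      case False
      have "card ?heavy \<le> 2" by (rule card_heavy_flips_le_2[OF card_T]) (use mid in auto)
      then have "ind_left (xs a) * card ?heavy \<le> ind_left (xs a) * 2"
        using ind_bounds(1)[of "xs a"] by (intro mult_left_mono) auto
      moreover from False have "?core = 0" by (force intro: prod_zero simp: ind_core_def)
      ultimately show ?thesis using \<open>?mid = 1\<close> by (simp only:) simp
    qed
  qed
  finally show ?thesis .
qed

end

section \<open>Symmetric atomless candidate distributions\<close>

locale symmetric_atomless =
  fixes M :: "real measure"
  assumes M_in_calF: "M \<in> calF"
begin

lemma sets_M [measurable_cong]: "sets M = sets borel"
  and measure_M_unit_interval: "measure M {0..1} = 1"
  and distr_reflect_M: "distr M borel (\<lambda>y. 1 - y) = M"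
  and measure_M_singleton: "measure M {y} = 0"
  using M_in_calF by (auto simp: calF_def)

sublocale prob_space M
  using M_in_calF by (simp add: calF_def)

lemma space_M: "space M = UNIV"
  using sets_eq_imp_space_eq[OF sets_M] by simp

lemma emeasure_M_reflect:
  assumes "A \<in> sets borel"
  shows "emeasure M ((\<lambda>y. 1 - y) -` A) = emeasure M A"
proof -
  have "emeasure M A = emeasure (distr M borel (\<lambda>y. 1 - y)) A" using distr_reflect_M by simp
  also have "\<dots> = emeasure M ((\<lambda>y. 1 - y) -` A)"
    by (subst emeasure_distr) (auto simp: assms space_M measurable_cong_sets[OF sets_M refl])
  finally show ?thesis by simp
qed

lemma measure_M_atLeast_reflect: "measure M {t..} = measure M {..1 - t}"
proof -
  have "(\<lambda>y. 1 - y) -` {..1 - t} = {t..}" by auto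
  then show ?thesis using emeasure_M_reflect[of "{..1 - t}"] by (simp add: measure_def)
qed

abbreviation P :: "(nat \<Rightarrow> real) measure" where "P \<equiv> PiM {..<4} (\<lambda>_. M)"

sublocale PS: product_sigma_finite "\<lambda>_::nat. M" ..

sublocale PP: prob_space P
  by (rule prob_space_PiM) (simp add: prob_space_axioms)

lemma measurable_coordinate [measurable]: "i \<in> {..<4} \<Longrightarrow> (\<lambda>xs. xs i) \<in> borel_measurable P"
  using measurable_coordinate_PiM[OF sets_M, of i 4] by simp

lemma space_P: "space P = PiE {..<4} (\<lambda>_. UNIV)"
  by (simp add: space_PiM space_M)

lemma measurable_flip: assumes "B \<subseteq> {..<4}" shows "flip B \<in> measurable P P"
proof -
  have "(\<lambda>xs. \<lambda>i\<in>{..<4}. if i \<in> B then 1 - xs i else xs i) \<in> measurable P P"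
    by (intro measurable_restrict) (auto simp: measurable_cong_sets[OF refl sets_M])
  moreover have "(\<lambda>i\<in>{..<4}. if i \<in> B then 1 - xs i else xs i) = flip B xs" if "xs \<in> space P" for xs
    using assms that by (auto simp: space_P flip_def PiE_def extensional_def fun_eq_iff)
  ultimately show ?thesis using measurable_cong by (metis (no_types, lifting))
qed

lemma distr_flip: assumes B: "B \<subseteq> {..<4}" shows "distr P P (flip B) = P"
proof (rule PS.PiM_eqI)
  fix A assume A: "\<And>i. i \<in> {..<4::nat} \<Longrightarrow> A i \<in> sets M"
  define A' where "A' i = (if i \<in> B then (\<lambda>y. 1 - y) -` A i else A i)" for i
  have A': "\<And>i. i \<in> {..<4} \<Longrightarrow> A' i \<in> sets M"
    using A measurable_sets[of "\<lambda>y::real. 1 - y" borel borel] by (auto simp: A'_def sets_M)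
  have "flip B -` Pi\<^sub>E {..<4} A \<inter> space P = Pi\<^sub>E {..<4} A'"
    using B by (auto simp: space_P flip_def PiE_def A'_def extensional_def Pi_def split: if_splits)
  then have "emeasure (distr P P (flip B)) (Pi\<^sub>E {..<4} A) = emeasure P (Pi\<^sub>E {..<4} A')"
    using A by (subst emeasure_distr) (auto intro: measurable_flip[OF B])
  also have "\<dots> = (\<Prod>i<4. emeasure M (A' i))"
    using A' by (subst PS.emeasure_PiM) auto
  also have "\<dots> = (\<Prod>i<4. emeasure M (A i))"
    by (intro prod.cong refl) (use A in \<open>auto simp: A'_def emeasure_M_reflect sets_M\<close>)
  finally show "emeasure (distr P P (flip B)) (Pi\<^sub>E {..<4} A) = (\<Prod>i<4. emeasure M (A i))" .
qed simp_all

lemma integral_flip: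
  fixes f :: "(nat \<Rightarrow> real) \<Rightarrow> real"
  assumes B: "B \<subseteq> {..<4}" and f: "f \<in> borel_measurable P"
  shows "(\<integral>xs. f (flip B xs) \<partial>P) = (\<integral>xs. f xs \<partial>P)"
  using integral_distr[OF measurable_flip[OF B] f] distr_flip[OF B] by simp

lemma integral_prod_coordinates:
  fixes g :: "nat \<Rightarrow> real \<Rightarrow> real"
  assumes g: "\<And>i. i < 4 \<Longrightarrow> g i \<in> borel_measurable borel"
    and bounded: "\<And>i y. i < 4 \<Longrightarrow> \<bar>g i y\<bar> \<le> 1"
  shows "(\<integral>xs. (\<Prod>i<4. g i (xs i)) \<partial>P) = (\<Prod>i<4. \<integral>y. g i y \<partial>M)"
proof (rule PS.product_integral_prod)
  fix i :: nat assume "i \<in> {..<4}"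
  then have [measurable]: "g i \<in> borel_measurable M"
    using g by (simp add: measurable_cong_sets[OF sets_M refl])
  show "integrable M (g i)"
    by (rule integrable_const_bound[where B=1]) (use bounded \<open>i \<in> {..<4}\<close> in auto)
qed simp

lemma integral_coordinate:
  fixes g :: "real \<Rightarrow> real"
  assumes "i < 4" and g: "g \<in> borel_measurable borel"
  shows "(\<integral>xs. g (xs i) \<partial>P) = (\<integral>y. g y \<partial>M)"
proof -
  have "distr P M (\<lambda>xs. xs i) = M"
    using \<open>i < 4\<close> by (intro distr_PiM_component) (auto simp: prob_space_axioms)
  moreover have "(\<integral>xs. g (xs i) \<partial>P) = (\<integral>y. g y \<partial>distr P M (\<lambda>xs. xs i))"
    by (rule integral_distr[symmetric]) (use \<open>i < 4\<close> g in \<open>auto simp: measurable_cong_sets[OF sets_M refl]\<close>)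
  ultimately show ?thesis by simp
qed

lemma integrable_P_bounded:
  fixes f :: "(nat \<Rightarrow> real) \<Rightarrow> real"
  shows "f \<in> borel_measurable P \<Longrightarrow> (\<And>xs. \<bar>f xs\<bar> \<le> 1) \<Longrightarrow> integrable P f"
  by (rule PP.integrable_const_bound[where B=1]) auto

lemma integral_prod_same:
  fixes g :: "real \<Rightarrow> real"
  assumes "g \<in> borel_measurable borel" "\<And>y. \<bar>g y\<bar> \<le> 1"
  shows "(\<integral>xs. (\<Prod>i<4. g (xs i)) \<partial>P) = (\<integral>y. g y \<partial>M) ^ 4"
  using integral_prod_coordinates[of "\<lambda>_. g"] assms by simp

lemma integrable_prod_same:
  fixes g :: "real \<Rightarrow> real"
  assumes "g \<in> borel_measurable borel" "\<And>y. \<bar>g y\<bar> \<le> 1"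
  shows "integrable P (\<lambda>xs. \<Prod>i<4. g (xs i))"
  using assms by (intro integrable_P_bounded) (auto simp: abs_prod prod_le_1)

lemma integral_coordinate_times_others:
  fixes g h :: "real \<Rightarrow> real"
  assumes "a < 4" and g: "g \<in> borel_measurable borel" "\<And>y. \<bar>g y\<bar> \<le> 1"
    and h: "h \<in> borel_measurable borel" "\<And>y. \<bar>h y\<bar> \<le> 1"
  shows "(\<integral>xs. g (xs a) * (\<Prod>j\<in>{..<4} - {a}. h (xs j)) \<partial>P)
    = (\<integral>y. g y \<partial>M) * (\<integral>y. h y \<partial>M) ^ 3"
proof -
  let ?g = "\<lambda>i. if i = a then g else h"
  have split: "(\<Prod>i<4. f i) = f a * (\<Prod>i\<in>{..<4} - {a}. f i)" for f :: "nat \<Rightarrow> real"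
    using \<open>a < 4\<close> by (subst prod.remove[of _ a]) auto
  have "(\<integral>xs. g (xs a) * (\<Prod>j\<in>{..<4} - {a}. h (xs j)) \<partial>P) = (\<integral>xs. (\<Prod>i<4. ?g i (xs i)) \<partial>P)"
    unfolding split[of "\<lambda>i. ?g i (_ i)"] by (intro Bochner_Integration.integral_cong refl prod.cong) auto
  also have "\<dots> = (\<Prod>i<4. \<integral>y. ?g i y \<partial>M)"
    by (rule integral_prod_coordinates) (use g h in auto)
  also have "\<dots> = (\<integral>y. g y \<partial>M) * (\<Prod>i\<in>{..<4} - {a}. \<integral>y. h y \<partial>M)"
    unfolding split[of "\<lambda>i. \<integral>y. ?g i y \<partial>M"] by (intro arg_cong2[where f="(*)"] prod.cong) auto
  finally show ?thesis using \<open>a < 4\<close> by simp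
qed

lemma measure_M_symmetric_interval:
  assumes "t < 1/2" shows "measure M {t<..<1 - t} = 1 - 2 * measure M {..t}"
proof -
  have "{..t} \<union> {t<..<1 - t} \<union> {1 - t..} = UNIV" using assms by auto
  then have "measure M ({..t} \<union> {t<..<1 - t} \<union> {1 - t..}) = 1"
    using prob_space space_M by simp
  moreover have "measure M ({..t} \<union> {t<..<1 - t} \<union> {1 - t..})
      = measure M {..t} + measure M {t<..<1 - t} + measure M {1 - t..}"
    using assms by (subst finite_measure_Union; auto simp: sets_M)+
  ultimately show ?thesis using measure_M_atLeast_reflect[of "1 - t"] by simp
qed

lemma measure_M_atMost_le_half:
  assumes "c < 1/2" shows "measure M {..c} \<le> 1/2"
  using measure_M_symmetric_interval[OF assms] measure_nonneg[of M "{c<..<1 - c}"] by simp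

lemma AE_coordinate_unit_interval:
  assumes "i < 4" shows "AE xs in P. 0 \<le> xs i \<and> xs i \<le> 1"
proof -
  have "AE y in M. y \<in> {0..1}" by (rule AE_prob_1) (simp add: measure_M_unit_interval)
  then have "AE y in distr P M (\<lambda>xs. xs i). y \<in> {0..1}"
    using assms by (subst distr_PiM_component) (auto simp: prob_space_axioms)
  then have "AE xs in P. xs i \<in> {0..1}"
    by (rule AE_distrD[rotated]) (use assms in auto)
  then show ?thesis by simp
qed

text \<open>Conditioning on all other coordinates, \<open>xs i\<close> must hit the single point \<open>xs j\<close>,
  which has probability zero because \<open>M\<close> is atomless.\<close>
lemma AE_coordinates_distinct:
  assumes "i < 4" "j < 4" "i \<noteq> j"
  shows "AE xs in P. xs i \<noteq> xs j"
proof -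
  define S where "S = {xs \<in> space P. xs i = xs j}"
  have S_sets [measurable]: "S \<in> sets P"
    unfolding S_def using assms by (intro borel_measurable_eq measurable_coordinate) auto
  let ?I = "{..<4::nat} - {i}"
  have "emeasure P S = (\<integral>\<^sup>+ xs. indicator S xs \<partial>P)" by simp
  also have "\<dots> = (\<integral>\<^sup>+ x. (\<integral>\<^sup>+ y. indicator S (x(i := y)) \<partial>M) \<partial>PiM ?I (\<lambda>_. M))"
    using PS.product_nn_integral_insert[of ?I i "indicator S"] assms by (simp add: insert_absorb)
  also have "\<dots> = (\<integral>\<^sup>+ x. 0 \<partial>PiM ?I (\<lambda>_. M))"
  proof (intro nn_integral_cong)
    fix x assume x: "x \<in> space (PiM ?I (\<lambda>_. M))"
    have "(\<integral>\<^sup>+ y. indicator S (x(i := y)) \<partial>M) = (\<integral>\<^sup>+ y. indicator {x j} y \<partial>M)"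
    proof (intro nn_integral_cong)
      fix y
      have "x(i := y) \<in> space P" using x assms by (auto simp: space_P space_PiM PiE_def extensional_def space_M)
      then show "indicator S (x(i := y)) = (indicator {x j} y :: ennreal)"
        using assms by (auto simp: S_def indicator_def)
    qed
    also have "\<dots> = 0" using measure_M_singleton by (simp add: sets_M emeasure_eq_measure)
    finally show "(\<integral>\<^sup>+ y. indicator S (x(i := y)) \<partial>M) = 0" .
  qed
  finally have "S \<in> null_sets P" using S_sets by auto
  then show ?thesis by (rule AE_I') (auto simp: S_def)
qed

lemma AE_generic_profile: "AE xs in P. generic_profile xs"
proof -
  have "AE xs in P. \<forall>i\<in>{..<4}. 0 \<le> xs i \<and> xs i \<le> 1"
    by (intro eventually_ball_finite ballI AE_coordinate_unit_interval) auto
  moreover have "AE xs in P. \<forall>i\<in>{..<4}. \<forall>j\<in>{..<4}. i \<noteq> j \<longrightarrow> xs i \<noteq> xs j"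
    using AE_coordinates_distinct by (intro eventually_ball_finite ballI) (auto intro: AE_impI)
  ultimately show ?thesis
    by eventually_elim (auto simp: generic_profile_def inj_on_def)
qed

lemma measurable_winner_in [measurable]:
  assumes [measurable]: "A \<in> sets borel"
  shows "(\<lambda>xs. winner_in 4 xs A) \<in> borel_measurable P"
proof -
  have [measurable]: "i \<in> {..<4} \<Longrightarrow> (\<lambda>xs. win_prob 4 xs i) \<in> borel_measurable P" for i
    using measurable_win_prob[OF _ measurable_coordinate] by simp
  show ?thesis unfolding winner_in_def by measurable
qed

lemma integrable_winner_in: "A \<in> sets borel \<Longrightarrow> integrable P (\<lambda>xs. winner_in 4 xs A)"
  by (intro integrable_P_bounded measurable_winner_in) (auto simp: winner_in_bounds abs_le_iff)

lemma emeasure_plurality_step_eq_integral: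
  assumes "A \<in> sets borel"
  shows "emeasure (plurality_step 4 M) A = ennreal (\<integral>xs. winner_in 4 xs A \<partial>P)"
  unfolding emeasure_plurality_step[OF sets_M assms]
  using assms by (intro nn_integral_eq_integral integrable_winner_in) (auto simp: winner_in_bounds)

lemma measure_plurality_step_eq_integral:
  assumes "A \<in> sets borel"
  shows "measure (plurality_step 4 M) A = (\<integral>xs. winner_in 4 xs A \<partial>P)"
  using emeasure_plurality_step_eq_integral[OF assms]
  by (simp add: measure_def integral_nonneg_AE winner_in_bounds)

lemma prob_space_plurality_step: "prob_space (plurality_step 4 M)"
proof (rule prob_spaceI)
  have "space (plurality_step 4 M) = UNIV"
    using sets_eq_imp_space_eq[OF sets_plurality_step] by simp
  then show "emeasure (plurality_step 4 M) (space (plurality_step 4 M)) = 1"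
    by (simp add: emeasure_plurality_step_eq_integral winner_in_UNIV PP.prob_space)
qed

lemma measure_plurality_step_unit_interval: "measure (plurality_step 4 M) {0..1} = 1"
proof -
  have "AE xs in P. \<forall>i\<in>{..<4}. 0 \<le> xs i \<and> xs i \<le> 1"
    by (intro eventually_ball_finite ballI AE_coordinate_unit_interval) auto
  then have "AE xs in P. winner_in 4 xs {0..1} = 1"
    by eventually_elim (simp add: winner_in_def sum_win_prob)
  then have "(\<integral>xs. winner_in 4 xs {0..1} \<partial>P) = (\<integral>xs. 1 \<partial>P)"
    by (intro integral_cong_AE) auto
  then show ?thesis by (simp add: measure_plurality_step_eq_integral PP.prob_space)
qed

lemma winner_in_flip_all: "winner_in 4 (flip {..<4} xs) A = winner_in 4 xs ((\<lambda>y. 1 - y) -` A)"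
proof -
  have "win_prob 4 (flip {..<4} xs) i = win_prob 4 xs i" for i
    using win_prob_cong[of 4 "flip {..<4} xs" "\<lambda>j. 1 - xs j"] win_prob_reflect
    by (simp add: flip_def)
  then show ?thesis by (simp add: winner_in_def flip_def indicator_def)
qed

lemma distr_reflect_plurality_step:
  "distr (plurality_step 4 M) borel (\<lambda>y. 1 - y) = plurality_step 4 M"
proof (rule measure_eqI)
  fix A :: "real set" assume "A \<in> sets (distr (plurality_step 4 M) borel (\<lambda>y. 1 - y))"
  then have A [measurable]: "A \<in> sets borel" by simp
  have "emeasure (distr (plurality_step 4 M) borel (\<lambda>y. 1 - y)) A
      = emeasure (plurality_step 4 M) ((\<lambda>y. 1 - y) -` A)"
    by (subst emeasure_distr) (auto simp: measurable_cong_sets[OF sets_plurality_step refl]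
        sets_eq_imp_space_eq[OF sets_plurality_step])
  also have "\<dots> = ennreal (\<integral>xs. winner_in 4 (flip {..<4} xs) A \<partial>P)"
    using measurable_sets[of "\<lambda>y::real. 1 - y" borel borel A]
    by (simp add: emeasure_plurality_step_eq_integral winner_in_flip_all)
  also have "\<dots> = emeasure (plurality_step 4 M) A"
    by (simp add: integral_flip[OF _ measurable_winner_in[OF A]] emeasure_plurality_step_eq_integral)
  finally show "emeasure (distr (plurality_step 4 M) borel (\<lambda>y. 1 - y)) A = emeasure (plurality_step 4 M) A" .
qed (simp add: sets_plurality_step)

lemma measure_plurality_step_singleton: "measure (plurality_step 4 M) {y} = 0"
proof -
  have [measurable]: "i \<in> {..<4} \<Longrightarrow> (\<lambda>xs. indicator {y} (xs i) :: real) \<in> borel_measurable P" for i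
    by measurable
  have integrable: "integrable P (\<lambda>xs. indicator {y} (xs i) :: real)" if "i \<in> {..<4}" for i
    using that by (intro integrable_P_bounded) auto
  have "winner_in 4 xs {y} \<le> (\<Sum>i<4. indicator {y} (xs i))" for xs
    unfolding winner_in_def by (intro sum_mono) (auto simp: indicator_def win_prob_le_1)
  then have "measure (plurality_step 4 M) {y} \<le> (\<integral>xs. (\<Sum>i<4. indicator {y} (xs i)) \<partial>P)"
    unfolding measure_plurality_step_eq_integral[of "{y}", simplified] using integrable
    by (intro integral_mono integrable_winner_in Bochner_Integration.integrable_sum) auto
  also have "\<dots> = 0"
    using integrable integral_coordinate[of _ "indicator {y}"] measure_M_singleton by simp
  finally show ?thesis using measure_nonneg[of "plurality_step 4 M" "{y}"] by simp
qed

lemma plurality_step_in_calF: "plurality_step 4 M \<in> calF"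
  unfolding calF_def
  using prob_space_plurality_step sets_plurality_step measure_plurality_step_unit_interval
    distr_reflect_plurality_step measure_plurality_step_singleton by blast

end

section \<open>One step of the dynamics\<close>

locale four_candidate_step = symmetric_atomless + plurality_threshold
begin

abbreviation cdf :: "real \<Rightarrow> real" where "cdf y \<equiv> measure M {..y}"

lemma measurable_indicators [measurable]: "ind_left \<in> borel_measurable borel"
  "ind_right \<in> borel_measurable borel" "ind_mid \<in> borel_measurable borel"
  "ind_core \<in> borel_measurable borel"
  unfolding ind_left_def ind_right_def ind_mid_def ind_core_def by measurable

lemma abs_indicators_le_1: "\<bar>ind_left y\<bar> \<le> 1" "\<bar>ind_right y\<bar> \<le> 1" "\<bar>ind_mid y\<bar> \<le> 1"
  "\<bar>ind_core y\<bar> \<le> 1" "\<bar>1 - ind_left y\<bar> \<le> 1" "\<bar>1 - ind_right y\<bar> \<le> 1"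
  using ind_bounds[of y] by (auto simp: ind_core_def indicator_def)

lemma integral_ind_left: "(\<integral>y. ind_left y \<partial>M) = cdf x"
  by (simp add: ind_left_def sets_M)

lemma integral_ind_right: "(\<integral>y. ind_right y \<partial>M) = cdf x"
  using measure_M_atLeast_reflect[of "1 - x"] by (simp add: ind_right_def sets_M)

lemma integral_ind_mid: "(\<integral>y. ind_mid y \<partial>M) = 1 - 2 * cdf x"
  using measure_M_symmetric_interval threshold_lt by (simp add: ind_mid_def sets_M)

lemma integral_ind_core: "(\<integral>y. ind_core y \<partial>M) = 1 - 2 * cdf core"
proof -
  have "core < 1/2" using threshold_lt by (simp add: core_def)
  then show ?thesis using measure_M_symmetric_interval by (simp add: ind_core_def sets_M)
qed

lemma cdf_core_le_half: "cdf core \<le> 1/2"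
  using threshold_lt by (intro measure_M_atMost_le_half) (simp add: core_def)

lemma measurable_lone_left [measurable]:
  assumes "a < 4" shows "lone_left a \<in> borel_measurable P"
proof -
  have [measurable]: "(\<lambda>xs. xs a) \<in> borel_measurable P" using assms by simp
  show ?thesis unfolding lone_left_def by measurable
qed

lemma abs_lone_left_le_1: "\<bar>lone_left a xs\<bar> \<le> 1"
  using lone_left_nonneg lone_left_le_1 by (simp add: abs_le_iff)

text \<open>Averaging over the eight reflections of the three other candidates: by the flip
  invariance of \<open>P\<close> each reflection has the same integral.\<close>
lemma integral_lone_left_le:
  assumes a: "a < 4"
  shows "(\<integral>xs. lone_left a xs \<partial>P) \<le> cdf x * ((1 - 2 * cdf x) ^ 3 - (1 - 2 * cdf core) ^ 3) / 4"
proof -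
  let ?T = "{..<4::nat} - {a}"
  let ?mid = "\<lambda>xs. ind_left (xs a) * (\<Prod>j\<in>?T. ind_mid (xs j))"
  let ?core = "\<lambda>xs. ind_left (xs a) * (\<Prod>j\<in>?T. ind_core (xs j))"
  have flips_integrable: "integrable P (\<lambda>xs. lone_left a (flip B xs))" if "B \<in> Pow ?T" for B
  proof -
    have "(\<lambda>xs. lone_left a (flip B xs)) \<in> borel_measurable P"
      using that a by (intro measurable_compose[OF measurable_flip measurable_lone_left]) auto
    then show ?thesis by (rule integrable_P_bounded) (rule abs_lone_left_le_1)
  qed
  have [measurable]: "(\<lambda>xs. xs a) \<in> borel_measurable P" using a by simp
  have "\<bar>?mid xs\<bar> \<le> 1" "\<bar>?core xs\<bar> \<le> 1" for xs
    using ind_bounds by (auto simp: abs_mult ind_core_def prod_le_1 abs_prod intro!: mult_le_one prod_nonneg)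
  then have mid_integrable: "integrable P ?mid" and core_integrable: "integrable P ?core"
    by (auto intro!: integrable_P_bounded)
  have "8 * (\<integral>xs. lone_left a xs \<partial>P) = (\<Sum>B\<in>Pow ?T. \<integral>xs. lone_left a xs \<partial>P)"
    using a by (simp add: card_Pow)
  also have "\<dots> = (\<Sum>B\<in>Pow ?T. \<integral>xs. lone_left a (flip B xs) \<partial>P)"
    using a by (intro sum.cong refl integral_flip[symmetric]) auto
  also have "\<dots> = (\<integral>xs. (\<Sum>B\<in>Pow ?T. lone_left a (flip B xs)) \<partial>P)"
    using flips_integrable by (rule Bochner_Integration.integral_sum[symmetric])
  also have "\<dots> \<le> (\<integral>xs. 2 * ?mid xs - 2 * ?core xs \<partial>P)"
    using sum_flips_lone_left_le[OF a] flips_integrable mid_integrable core_integrable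
    by (intro integral_mono) (auto simp: algebra_simps)
  also have "\<dots> = 2 * (\<integral>xs. ?mid xs \<partial>P) - 2 * (\<integral>xs. ?core xs \<partial>P)"
    using mid_integrable core_integrable by simp
  also have "\<dots> = 2 * cdf x * (1 - 2 * cdf x) ^ 3 - 2 * cdf x * (1 - 2 * cdf core) ^ 3"
    using a abs_indicators_le_1
    by (simp add: integral_coordinate_times_others integral_ind_left integral_ind_mid integral_ind_core)
  finally show ?thesis by (simp add: algebra_simps)
qed

lemma lone_left_reflect_eq_flip:
  assumes "a < 4" shows "lone_left a (\<lambda>j. 1 - xs j) = lone_left a (flip {..<4} xs)"
  unfolding lone_left_def flip_def using assms
  by (intro arg_cong2[where f="(*)"] arg_cong[where f=of_bool] sum.cong prod.cong) auto

lemma integral_lone_left_reflect: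
  assumes "a < 4" shows "(\<integral>xs. lone_left a (\<lambda>j. 1 - xs j) \<partial>P) = (\<integral>xs. lone_left a xs \<partial>P)"
  using assms by (simp add: lone_left_reflect_eq_flip integral_flip)

lemma win_bound_expand:
  "win_bound xs = 1 - (\<Prod>i<4. 1 - ind_right (xs i)) - (\<Prod>i<4. 1 - ind_left (xs i))
    + (\<Prod>i<4. ind_mid (xs i)) + (\<Prod>i<4. ind_left (xs i)) + (\<Prod>i<4. ind_right (xs i))
    + (\<Sum>a<4. lone_left a xs + lone_left a (\<lambda>j. 1 - xs j))"
proof -
  have "(1 - ind_right y) * (1 - ind_left y) = ind_mid y" for y
    using threshold_lt by (auto simp: ind_left_def ind_right_def ind_mid_def indicator_def)
  then have "(\<Prod>i<4. 1 - ind_right (xs i)) * (\<Prod>i<4. 1 - ind_left (xs i)) = (\<Prod>i<4. ind_mid (xs i))"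
    by (simp add: prod.distrib[symmetric])
  then show ?thesis unfolding win_bound_def by (simp add: algebra_simps)
qed

lemma integrable_lone_left:
  assumes "a < 4"
  shows "integrable P (lone_left a)" "integrable P (\<lambda>xs. lone_left a (\<lambda>j. 1 - xs j))"
  using assms abs_lone_left_le_1 by (auto intro!: integrable_P_bounded simp: lone_left_reflect_eq_flip
      intro: measurable_compose[OF measurable_flip measurable_lone_left])

lemma integrable_win_bound: "integrable P win_bound"
  unfolding win_bound_expand[abs_def]
  using abs_indicators_le_1 integrable_lone_left
  by (intro Bochner_Integration.integrable_add Bochner_Integration.integrable_diff
      Bochner_Integration.integrable_sum integrable_prod_same) auto

lemma integral_win_bound_le:
  "(\<integral>xs. win_bound xs \<partial>P) \<le> 2 * cdf x - 2 * cdf x * (1 - 2 * cdf core) ^ 3"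
proof -
  let ?F = "cdf x" and ?K = "(1 - 2 * cdf core) ^ 3"
  let ?lone = "\<lambda>xs. \<Sum>a<4. lone_left a xs + lone_left a (\<lambda>j. 1 - xs j)"
  have "(\<integral>xs. ?lone xs \<partial>P) = (\<Sum>a<4. 2 * (\<integral>xs. lone_left a xs \<partial>P))"
    using integrable_lone_left by (simp add: Bochner_Integration.integral_sum integral_lone_left_reflect)
  also have "\<dots> \<le> (\<Sum>a<4::nat. 2 * (?F * ((1 - 2 * ?F) ^ 3 - ?K) / 4))"
    by (intro sum_mono mult_left_mono integral_lone_left_le) auto
  finally have lone: "(\<integral>xs. ?lone xs \<partial>P) \<le> 2 * ?F * ((1 - 2 * ?F) ^ 3 - ?K)" by simp
  have "integrable P ?lone"
    using integrable_lone_left by (intro Bochner_Integration.integrable_sum) auto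
  then have "(\<integral>xs. win_bound xs \<partial>P) = 1 - (\<integral>xs. (\<Prod>i<4. 1 - ind_right (xs i)) \<partial>P)
      - (\<integral>xs. (\<Prod>i<4. 1 - ind_left (xs i)) \<partial>P) + (\<integral>xs. (\<Prod>i<4. ind_mid (xs i)) \<partial>P)
      + (\<integral>xs. (\<Prod>i<4. ind_left (xs i)) \<partial>P) + (\<integral>xs. (\<Prod>i<4. ind_right (xs i)) \<partial>P)
      + (\<integral>xs. ?lone xs \<partial>P)"
    unfolding win_bound_expand
    using integrable_prod_same[of "\<lambda>y. 1 - ind_right y"]
      integrable_prod_same[of "\<lambda>y. 1 - ind_left y"] integrable_prod_same[of ind_mid]
      integrable_prod_same[of ind_left] integrable_prod_same[of ind_right] abs_indicators_le_1
    by (simp add: PP.prob_space)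
  also have "\<dots> = 1 - (1 - ?F) ^ 4 - (1 - ?F) ^ 4 + (1 - 2 * ?F) ^ 4 + ?F ^ 4 + ?F ^ 4
      + (\<integral>xs. ?lone xs \<partial>P)"
  proof -
    have "integrable M ind_left" "integrable M ind_right"
      using abs_indicators_le_1 by (auto intro!: integrable_const_bound[where B=1]
          simp: measurable_cong_sets[OF sets_M refl])
    then have "(\<integral>y. 1 - ind_left y \<partial>M) = 1 - ?F" "(\<integral>y. 1 - ind_right y \<partial>M) = 1 - ?F"
      by (simp_all add: prob_space integral_ind_left integral_ind_right)
    moreover have "(\<lambda>y. 1 - ind_left y) \<in> borel_measurable borel"
      "(\<lambda>y. 1 - ind_right y) \<in> borel_measurable borel" by simp_all
    ultimately have "(\<integral>xs. (\<Prod>i<4. 1 - ind_left (xs i)) \<partial>P) = (1 - ?F) ^ 4"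
      "(\<integral>xs. (\<Prod>i<4. 1 - ind_right (xs i)) \<partial>P) = (1 - ?F) ^ 4"
      using integral_prod_same[of "\<lambda>y. 1 - ind_left y"] integral_prod_same[of "\<lambda>y. 1 - ind_right y"]
        abs_indicators_le_1 by simp_all
    moreover have "(\<integral>xs. (\<Prod>i<4. ind_mid (xs i)) \<partial>P) = (1 - 2 * ?F) ^ 4"
      "(\<integral>xs. (\<Prod>i<4. ind_left (xs i)) \<partial>P) = ?F ^ 4"
      "(\<integral>xs. (\<Prod>i<4. ind_right (xs i)) \<partial>P) = ?F ^ 4"
      using abs_indicators_le_1
      by (simp_all add: integral_prod_same integral_ind_left integral_ind_right integral_ind_mid)
    ultimately show ?thesis by (simp only:)
  qed
  also have "\<dots> \<le> 1 - (1 - ?F) ^ 4 - (1 - ?F) ^ 4 + (1 - 2 * ?F) ^ 4 + ?F ^ 4 + ?F ^ 4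
      + 2 * ?F * ((1 - 2 * ?F) ^ 3 - ?K)"
    using lone by linarith
  also have "\<dots> = 2 * ?F - 2 * ?F * ?K" by algebra
  finally show ?thesis .
qed

lemma integral_winner_left_le:
  "(\<integral>xs. winner_in 4 xs {..x} \<partial>P) \<le> cdf x - cdf x * (1 - 2 * cdf core) ^ 3"
proof -
  have "(\<integral>xs. winner_in 4 xs {1 - x..} \<partial>P) = (\<integral>xs. winner_in 4 (flip {..<4} xs) {..x} \<partial>P)"
  proof -
    have "(\<lambda>y. 1 - y) -` {..x} = {1 - x..}" by auto
    then show ?thesis by (simp add: winner_in_flip_all)
  qed
  also have "\<dots> = (\<integral>xs. winner_in 4 xs {..x} \<partial>P)"
    by (intro integral_flip measurable_winner_in) auto
  finally have reflect: "(\<integral>xs. winner_in 4 xs {1 - x..} \<partial>P) = (\<integral>xs. winner_in 4 xs {..x} \<partial>P)" .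
  have sides: "winner_in 4 xs {..x} + winner_in 4 xs {1 - x..}
      = (\<Sum>i<4. win_prob 4 xs i * (ind_left (xs i) + ind_right (xs i)))" for xs
    by (simp add: winner_in_def ind_left_def ind_right_def sum.distrib algebra_simps)
  have "(\<integral>xs. winner_in 4 xs {..x} \<partial>P) + (\<integral>xs. winner_in 4 xs {1 - x..} \<partial>P)
      = (\<integral>xs. winner_in 4 xs {..x} + winner_in 4 xs {1 - x..} \<partial>P)"
    by (simp add: integrable_winner_in)
  also have "\<dots> \<le> (\<integral>xs. win_bound xs \<partial>P)"
    using AE_generic_profile
    by (intro integral_mono_AE Bochner_Integration.integrable_add integrable_winner_in integrable_win_bound)
      (auto elim!: AE_mp simp: sides side_win_mass_le_win_bound)
  finally have "(\<integral>xs. winner_in 4 xs {..x} \<partial>P) + (\<integral>xs. winner_in 4 xs {1 - x..} \<partial>P)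
      \<le> (\<integral>xs. win_bound xs \<partial>P)" .
  with reflect integral_win_bound_le show ?thesis by linarith
qed

lemma measure_plurality_step_le:
  "measure (plurality_step 4 M) {..x} \<le> cdf x * (1 - 4 * (1/2 - cdf core) ^ 3)"
proof -
  have "measure (plurality_step 4 M) {..x} \<le> cdf x - cdf x * (1 - 2 * cdf core) ^ 3"
    using integral_winner_left_le by (simp add: measure_plurality_step_eq_integral)
  also have "\<dots> = cdf x * (1 - 8 * (1/2 - cdf core) ^ 3)"
    by (simp add: power3_eq_cube algebra_simps)
  also have "\<dots> \<le> cdf x * (1 - 4 * (1/2 - cdf core) ^ 3)"
    using cdf_core_le_half by (intro mult_left_mono) auto
  finally show ?thesis .
qed

end

section \<open>Iterating the dynamics\<close>

lemma plurality_step_power_in_calF: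
  assumes "F0 \<in> calF" shows "(plurality_step 4 ^^ t) F0 \<in> calF"
proof (induction t)
  case (Suc t)
  then interpret symmetric_atomless "(plurality_step 4 ^^ t) F0" by unfold_locales
  show ?case using plurality_step_in_calF by simp
qed (simp add: assms)

lemma measure_atMost_le_half:
  assumes "F \<in> calF" "c < 1/2" shows "measure F {..c} \<le> 1/2"
proof -
  interpret symmetric_atomless F by unfold_locales (rule assms(1))
  show ?thesis using assms(2) by (rule measure_M_atMost_le_half)
qed

lemma replicator_cdf_Suc_le:
  assumes "F0 \<in> calF" "1/3 < y" "y < 1/2"
  shows "replicator_cdf 4 (Suc t) F0 y
    \<le> replicator_cdf 4 t F0 y * (1 - 4 * (1/2 - replicator_cdf 4 t F0 (y/3 + 1/3)) ^ 3)"
proof -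
  interpret four_candidate_step "(plurality_step 4 ^^ t) F0" y
    using plurality_step_power_in_calF[OF assms(1)] assms(2,3) by unfold_locales
  show ?thesis using measure_plurality_step_le by (simp add: replicator_cdf_def core_def)
qed

lemma replicator_cdf_le_initial:
  assumes "F0 \<in> calF" "1/3 < c" "c < 1/2"
  shows "replicator_cdf 4 t F0 c \<le> measure F0 {..c}"
proof (induction t)
  case (Suc t)
  have "replicator_cdf 4 t F0 (c/3 + 1/3) \<le> 1/2"
    unfolding replicator_cdf_def
    using assms by (intro measure_atMost_le_half plurality_step_power_in_calF) auto
  then have "1 - 4 * (1/2 - replicator_cdf 4 t F0 (c/3 + 1/3)) ^ 3 \<le> 1" by simp
  then have "replicator_cdf 4 (Suc t) F0 c \<le> replicator_cdf 4 t F0 c"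
    using replicator_cdf_Suc_le[OF assms, of t] mult_left_mono[of _ 1 "replicator_cdf 4 t F0 c"]
    by (fastforce simp: replicator_cdf_def)
  with Suc show ?case by simp
qed (simp add: replicator_cdf_def)

lemma contraction_rate_nonneg:
  assumes "F0 \<in> calF" "c < 1/2"
  shows "0 \<le> 1 - 4 * (1/2 - measure F0 {..c}) ^ 3"
proof -
  have "(1/2 - measure F0 {..c}) ^ 3 \<le> (1/2) ^ 3"
    using measure_atMost_le_half[OF assms] measure_nonneg[of F0 "{..c}"] by (intro power_mono) auto
  then show ?thesis by (simp add: power_divide)
qed

lemma replicator_cdf_Suc_le_initial_rate:
  assumes "F0 \<in> calF" "1/3 < x" "x < 1/2"
  shows "replicator_cdf 4 (Suc t) F0 x
    \<le> replicator_cdf 4 t F0 x * (1 - 4 * (1/2 - measure F0 {..x/3 + 1/3}) ^ 3)"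
proof -
  let ?c = "x/3 + 1/3"
  have "1/3 < ?c" "?c < 1/2" using assms by auto
  then have "replicator_cdf 4 t F0 ?c \<le> measure F0 {..?c}" "measure F0 {..?c} \<le> 1/2"
    using replicator_cdf_le_initial measure_atMost_le_half assms(1) by auto
  then have "1 - 4 * (1/2 - replicator_cdf 4 t F0 ?c) ^ 3 \<le> 1 - 4 * (1/2 - measure F0 {..?c}) ^ 3"
    by (auto intro!: power_mono)
  with replicator_cdf_Suc_le[OF assms, of t] show ?thesis
    by (fastforce simp: replicator_cdf_def intro: order_trans mult_left_mono)
qed

theorem mainTheorem5:
  fixes F0 :: "real measure" and x :: real and t :: nat
  assumes "F0 \<in> calF" and "1/3 < x" and "x < 1/2"
  shows "replicator_cdf 4 t F0 x
           \<le> measure F0 {..x} * (1 - 4 * (1/2 - measure F0 {..x/3 + 1/3}) ^ 3) ^ t"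
proof (induction t)
  case 0
  then show ?case by (simp add: replicator_cdf_def)
next
  case (Suc t)
  let ?K = "1 - 4 * (1/2 - measure F0 {..x/3 + 1/3}) ^ 3"
  have "0 \<le> ?K" using contraction_rate_nonneg assms by simp
  have "replicator_cdf 4 (Suc t) F0 x \<le> replicator_cdf 4 t F0 x * ?K"
    by (rule replicator_cdf_Suc_le_initial_rate[OF assms])
  also have "\<dots> \<le> measure F0 {..x} * ?K ^ t * ?K"
    using Suc \<open>0 \<le> ?K\<close> by (rule mult_right_mono)
  finally show ?case by (simp only: power_Suc2 mult.assoc)
qed

end
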